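(* Let $P$ be any product rule and $\mathcal A=\langle X,F,\Delta\rangle$ a $P$-automaton. Then for every term $\alpha\in\mathrm{Terms}(X)$, $[\![\alpha]\!]_{\mathcal A}=[\![\alpha]\!]_\varrho$, where $\varrho:X\to\mathbb Q\langle\langle\Sigma\rangle\rangle$ is the valuation $\varrho(x)=[\![x]\!]_{\mathcal A}$.
   Context: Let $\Sigma$ be a finite alphabet, $\Sigma^*$ the set of finite words with empty word $\varepsilon$. A series is a function $f:\Sigma^*\to\mathbb Q$; $f_w=f(w)$; series form a $\mathbb Q$-vector space under pointwise operations with zero $\mathbb 0$. For $a\in\Sigma$, $\delta_af$ is $w\mapsto f(aw)$. Terms: $\mathrm{Terms}(X)$ generated by $u,v::=x\mid 0\mid c\cdot u\mid u+v\mid u*v$ ($x\in X$, $c\in\mathbb Q$). A product rule is a term $P$ over $\{x,\dot x,y,\dot y\}$; $P(s_1,s_2,s_3,s_4)$ is substitution for $x,\dot x,y,\dot y$. The $P$-product $*$ and semantics $[\![u]\!]_\varrho$ under valuations $\varrho:X\to$ series are the unique pair with $(f*g)_\varepsilon=f_\varepsilon g_\varepsilon$, $\delta_a(f*g)=[\![P]\!]_{[x\mapsto f,\dot x\mapsto\delta_af,y\mapsto g,\dot y\mapsto\delta_ag]}$, and $[\![\cdot]\!]_\varrho$ interpreting variables via $\varrho$ and constructors by zero, scalar multiplication, addition, $*$. $P$-automaton: a tuple $\mathcal A=\langle X,F,\Delta\rangle$ with variable set $X$, output $F:X\to\mathbb Q$, transitions $\Delta_a:X\to\mathrm{Terms}(X)$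 for $a\in\Sigma$. The $P$-extension of $D:X\to\mathrm{Terms}(X)$ is $\tilde D:\mathrm{Terms}(X)\to\mathrm{Terms}(X)$ with $\tilde D0=0$, $\tilde Dx=Dx$, $\tilde D(c\cdot\alpha)=c\cdot\tilde D\alpha$, $\tilde D(\alpha+\beta)=\tilde D\alpha+\tilde D\beta$, $\tilde D(\alpha*\beta)=P(\alpha,\tilde D\alpha,\beta,\tilde D\beta)$. $F$ is extended to terms by evaluation in $\mathbb Q$. The series recognised by $\alpha\in\mathrm{Terms}(X)$ is the unique $[\![\alpha]\!]_{\mathcal A}$ with $([\![\alpha]\!]_{\mathcal A})_\varepsilon=F(\alpha)$ and $\delta_a[\![\alpha]\!]_{\mathcal A}=[\![\tilde\Delta_a\alpha]\!]_{\mathcal A}$ for all $a\in\Sigma$. *)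

theory Defs
  imports Main "HOL.Rat"
begin

type_synonym 'a series = "'a list \<Rightarrow> rat"

definition deriv :: "'a \<Rightarrow> 'a series \<Rightarrow> 'a series" where
  "deriv a f = (\<lambda>w. f (a # w))"

datatype 'x trm = Var 'x | Zero | Scal rat "'x trm" | Plus "'x trm" "'x trm" | Times "'x trm" "'x trm"

text \<open>Variables of a product rule: x, x-dot, y, y-dot.\<close>
datatype pvar = PX | PXd | PY | PYd

type_synonym prule = "pvar trm"

primrec subst :: "('x \<Rightarrow> 'y trm) \<Rightarrow> 'x trm \<Rightarrow> 'y trm" where
  "subst s (Var x) = s x"
| "subst s Zero = Zero"
| "subst s (Scal c u) = Scal c (subst s u)"
| "subst s (Plus u v) = Plus (subst s u) (subst s v)"
| "subst s (Times u v) = Times (subst s u) (subst s v)"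

definition papp :: "prule \<Rightarrow> 'x trm \<Rightarrow> 'x trm \<Rightarrow> 'x trm \<Rightarrow> 'x trm \<Rightarrow> 'x trm" where
  "papp P s1 s2 s3 s4 = subst (\<lambda>v. case v of PX \<Rightarrow> s1 | PXd \<Rightarrow> s2 | PY \<Rightarrow> s3 | PYd \<Rightarrow> s4) P"

primrec sem :: "('a series \<Rightarrow> 'a series \<Rightarrow> 'a series) \<Rightarrow> ('x \<Rightarrow> 'a series) \<Rightarrow> 'x trm \<Rightarrow> 'a series" where
  "sem m \<rho> (Var x) = \<rho> x"
| "sem m \<rho> Zero = (\<lambda>w. 0)"
| "sem m \<rho> (Scal c u) = (\<lambda>w. c * sem m \<rho> u w)"
| "sem m \<rho> (Plus u v) = (\<lambda>w. sem m \<rho> u w + sem m \<rho> v w)"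
| "sem m \<rho> (Times u v) = m (sem m \<rho> u) (sem m \<rho> v)"

definition is_P_product :: "prule \<Rightarrow> ('a series \<Rightarrow> 'a series \<Rightarrow> 'a series) \<Rightarrow> bool" where
  "is_P_product P m \<longleftrightarrow>
     (\<forall>f g. m f g [] = f [] * g [] \<and>
       (\<forall>a. deriv a (m f g) =
          sem m (\<lambda>v. case v of PX \<Rightarrow> f | PXd \<Rightarrow> deriv a f | PY \<Rightarrow> g | PYd \<Rightarrow> deriv a g) P))"

primrec pext :: "prule \<Rightarrow> ('x \<Rightarrow> 'x trm) \<Rightarrow> 'x trm \<Rightarrow> 'x trm" where
  "pext P D (Var x) = D x"
| "pext P D Zero = Zero"
| "pext P D (Scal c u) = Scal c (pext P D u)"
| "pext P D (Plus u v) = Plus (pext P D u) (pext P D v)"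
| "pext P D (Times u v) = papp P u (pext P D u) v (pext P D v)"

primrec outext :: "('x \<Rightarrow> rat) \<Rightarrow> 'x trm \<Rightarrow> rat" where
  "outext F (Var x) = F x"
| "outext F Zero = 0"
| "outext F (Scal c u) = c * outext F u"
| "outext F (Plus u v) = outext F u + outext F v"
| "outext F (Times u v) = outext F u * outext F v"

text \<open>S is the (unique) function assigning to each term the series it recognises in the
  P-automaton <X, F, Delta>.\<close>
definition recognises :: "prule \<Rightarrow> ('x \<Rightarrow> rat) \<Rightarrow> ('a \<Rightarrow> 'x \<Rightarrow> 'x trm) \<Rightarrow> ('x trm \<Rightarrow> 'a series) \<Rightarrow> bool" where
  "recognises P F \<Delta> S \<longleftrightarrow>
     (\<forall>\<alpha>. S \<alpha> [] = outext F \<alpha> \<and> (\<forall>a. deriv a (S \<alpha>) = S (pext P (\<Delta> a) \<alpha>)))"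

end

theory Submission
  imports Defs
begin

text \<open>A \<open>P\<close>-product is causal: the coefficients of \<open>f * g\<close> on words of length at most \<open>n\<close>
  depend only on those of \<open>f\<close> and \<open>g\<close>. Hence the same holds for the semantics of terms, and
  by induction on \<open>n\<close> the series recognised by \<open>\<alpha>\<close> and \<open>[[\<alpha>]]\<^sub>\<rho>\<close> agree on all words of
  length at most \<open>n\<close>: their constant terms coincide, and their \<open>a\<close>-derivatives are, up to
  length \<open>n\<close>, the corresponding series of \<open>\<Delta>\<^sub>a\<alpha>\<close>, since the \<open>P\<close>-extension computes
  derivatives of semantics by the product rule.\<close>

definition agree_upto :: "nat \<Rightarrow> 'a series \<Rightarrow> 'a series \<Rightarrow> bool" where
  "agree_upto n f g \<longleftrightarrow> (\<forall>w. length w \<le> n \<longrightarrow> f w = g w)"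

lemma agree_upto_0: "agree_upto 0 f g \<longleftrightarrow> f [] = g []"
  by (simp add: agree_upto_def)

lemma agree_upto_Suc:
  "agree_upto (Suc n) f g \<longleftrightarrow> f [] = g [] \<and> (\<forall>a. agree_upto n (deriv a f) (deriv a g))"
proof
  assume "agree_upto (Suc n) f g"
  then show "f [] = g [] \<and> (\<forall>a. agree_upto n (deriv a f) (deriv a g))"
    by (simp add: agree_upto_def deriv_def)
next
  assume agree: "f [] = g [] \<and> (\<forall>a. agree_upto n (deriv a f) (deriv a g))"
  show "agree_upto (Suc n) f g"
    unfolding agree_upto_def
  proof (intro allI impI)
    fix w :: "'a list"
    assume "length w \<le> Suc n"
    with agree show "f w = g w"
      by (cases w) (auto simp: agree_upto_def deriv_def)
  qed
qed

lemma agree_upto_SucD: "agree_upto (Suc n) f g \<Longrightarrow> agree_upto n f g"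
  by (simp add: agree_upto_def)

lemma agree_upto_all: "(\<And>n. agree_upto n f g) \<Longrightarrow> f = g"
  by (auto simp: agree_upto_def)

lemma sem_subst: "sem m \<rho> (subst s t) = sem m (\<lambda>x. sem m \<rho> (s x)) t"
  by (induction t) auto

lemma sem_papp:
  "sem m \<rho> (papp P s1 s2 s3 s4) =
     sem m (case_pvar (sem m \<rho> s1) (sem m \<rho> s2) (sem m \<rho> s3) (sem m \<rho> s4)) P"
  unfolding papp_def sem_subst by (metis pvar.case_distrib)

lemma is_P_productD:
  assumes "is_P_product P m"
  shows "m f g [] = f [] * g []"
    and "deriv a (m f g) = sem m (case_pvar f (deriv a f) g (deriv a g)) P"
  using assms unfolding is_P_product_def by simp_all

lemma sem_agree_upto:
  assumes "\<And>f f' g g'. agree_upto n f f' \<Longrightarrow> agree_upto n g g' \<Longrightarrow>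
      agree_upto n (m f g) (m f' g')"
    and "\<And>x. agree_upto n (\<rho> x) (\<rho>' x)"
  shows "agree_upto n (sem m \<rho> t) (sem m \<rho>' t)"
proof (induction t)
  case (Times u v)
  then show ?case by (simp add: assms(1))
qed (simp_all add: assms(2), simp_all add: agree_upto_def)

lemma P_product_agree_upto:
  assumes "is_P_product P m"
  shows "agree_upto n f f' \<Longrightarrow> agree_upto n g g' \<Longrightarrow> agree_upto n (m f g) (m f' g')"
proof (induction n arbitrary: f f' g g')
  case 0
  then show ?case
    by (simp add: agree_upto_0 is_P_productD(1)[OF assms])
next
  case (Suc n)
  have "agree_upto n (deriv a (m f g)) (deriv a (m f' g'))" for a
  proof -
    have args: "agree_upto n (case_pvar f (deriv a f) g (deriv a g) v)
        (case_pvar f' (deriv a f') g' (deriv a g') v)" for v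
      using Suc.prems by (cases v) (auto simp: agree_upto_Suc agree_upto_SucD)
    show ?thesis
      unfolding is_P_productD(2)[OF assms] by (rule sem_agree_upto[OF Suc.IH args])
  qed
  with Suc.prems show ?case
    by (simp add: agree_upto_Suc is_P_productD(1)[OF assms])
qed

lemma deriv_sem_agree_upto_pext:
  assumes P: "is_P_product P m"
    and D: "\<And>x. agree_upto n (deriv a (\<rho> x)) (sem m \<rho> (D x))"
  shows "agree_upto n (deriv a (sem m \<rho> t)) (sem m \<rho> (pext P D t))"
proof (induction t)
  case (Times u v)
  have "agree_upto n
      (case_pvar (sem m \<rho> u) (deriv a (sem m \<rho> u)) (sem m \<rho> v) (deriv a (sem m \<rho> v)) x)
      (case_pvar (sem m \<rho> u) (sem m \<rho> (pext P D u)) (sem m \<rho> v) (sem m \<rho> (pext P D v)) x)"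
    for x
    using Times by (cases x) (auto simp: agree_upto_def)
  then show ?case
    by (simp add: is_P_productD(2)[OF P] sem_papp sem_agree_upto P_product_agree_upto[OF P])
qed (simp_all add: D, simp_all add: agree_upto_def deriv_def)

lemma sem_Nil:
  assumes "is_P_product P m"
  shows "sem m \<rho> t [] = outext (\<lambda>x. \<rho> x []) t"
  by (induction t) (simp_all add: is_P_productD(1)[OF assms])

lemma recognised_Nil_eq_sem:
  assumes "is_P_product P m" and "recognises P F \<Delta> S"
  shows "S \<alpha> [] = sem m (\<lambda>x. S (Var x)) \<alpha> []"
  using assms(2) by (simp add: recognises_def sem_Nil[OF assms(1)])

lemma recognised_agree_upto_sem:
  assumes P: "is_P_product P m" and R: "recognises P F \<Delta> S"
  shows "agree_upto n (S \<alpha>) (sem m (\<lambda>x. S (Var x)) \<alpha>)"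
proof (induction n arbitrary: \<alpha>)
  case 0
  show ?case by (simp add: agree_upto_0 recognised_Nil_eq_sem[OF P R])
next
  case (Suc n)
  let ?T = "sem m (\<lambda>x. S (Var x))"
  have "agree_upto n (deriv a (S \<alpha>)) (deriv a (?T \<alpha>))" for a
  proof -
    have "agree_upto n (deriv a (S (Var x))) (?T (\<Delta> a x))" for x
      using R Suc.IH by (simp add: recognises_def)
    then have "agree_upto n (deriv a (?T \<alpha>)) (?T (pext P (\<Delta> a) \<alpha>))"
      by (rule deriv_sem_agree_upto_pext[OF P])
    then show ?thesis
      using R Suc.IH by (simp add: recognises_def agree_upto_def)
  qed
  then show ?case by (simp add: agree_upto_Suc recognised_Nil_eq_sem[OF P R])
qed

theorem mainTheorem6:
  fixes P :: prule
    and m :: "('a::finite) series \<Rightarrow> 'a series \<Rightarrow> 'a series"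
    and F :: "'x \<Rightarrow> rat"
    and \<Delta> :: "'a \<Rightarrow> 'x \<Rightarrow> 'x trm"
    and S :: "'x trm \<Rightarrow> 'a series"
  assumes "is_P_product P m"
    and "recognises P F \<Delta> S"
  shows "\<forall>\<alpha>. S \<alpha> = sem m (\<lambda>x. S (Var x)) \<alpha>"
  using agree_upto_all recognised_agree_upto_sem[OF assms] by blast

end
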